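(* Consider the boundary driven Kawasaki process on $\{0,1\}^N$ with $N\geq 5$ and $\mu_L>\kappa>0>\mu_R$, $|\mu_R|>\kappa$. Let $x\in\mathcal{P}$. If $U(x,y)=0$, then $y\in\mathcal{E}$, and moreover $U(y,z)=0$ implies $z=x$.
   Context: Configurations $x\in\{0,1\}^N$; energy $E(x)=-\kappa\sum_{i=1}^{N-1}x(i)x(i+1)$. $x^{i,j}$: occupations of $i,j$ exchanged; $x^i$ ($i\in\{1,N\}$): occupation of $i$ flipped. Transitions: for $|i-j|=1$, $x(i)\neq x(j)$, $x\to x^{i,j}$ at rate $\exp[-\frac\beta2(E(x^{i,j})-E(x))]$; for $i\in\{1,N\}$, $x\to x^i$ at rate $\exp[\frac{\beta\mu_i}{2}(1-2x(i))]\exp[-\frac\beta2(E(x^i)-E(x))]$, $\mu_1=\mu_L$, $\mu_N=\mu_R$. For an allowed transition $x\to y$ let $\phi(x,y)=\lim_{\beta\to\infty}\frac1\beta\log k(x\to y)$, $\Gamma(x)=-\max_y\phi(x,y)$, $U(x,y)=-\phi(x,y)-\Gamma(x)\geq0$. A configuration is written by its blocks $x=(p_0,q_0,\dots,p_n,q_n)$: reading from site 1, $p_0$ consecutive occupied sites, then $q_0$ vacant sites, then $p_1$ occupied, etc., with $\sum_i(p_i+q_i)=N$. $\mathcal{P}$ is the set of configurations $(p_0,q_0,\dots,p_n,q_n)$ with $p_i\geq 3$ for all $i$, $q_i\geq 3$ for all $i<n$, and $q_n\geq 2$. $\mathcal{E}$ is the set of configurations obtained from some $x\in\mathcal{P}$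 by a single nearest-neighbour exchange that either turns a local pattern $\dots 11100\dots$ (right end of an occupied block) into $\dots 11010\dots$, or turns a local pattern $\dots 000111\dots$ (left end of an occupied block) into $\dots 001011\dots$. *)

theory Defs
  imports Complex_Main
begin

text \<open>Configurations of {0,1}^N are lists of length N with entries in {0,1};
  site i (1 \<le> i \<le> N) is list position i - 1.\<close>

definition configs :: "nat \<Rightarrow> nat list set" where
  "configs N = {x. length x = N \<and> set x \<subseteq> {0, 1}}"

definition occ :: "nat list \<Rightarrow> nat \<Rightarrow> nat" where
  "occ x i = x ! (i - 1)"

definition exch :: "nat list \<Rightarrow> nat \<Rightarrow> nat \<Rightarrow> nat list" where
  "exch x i j = x[i - 1 := occ x j, j - 1 := occ x i]"

definition flip :: "nat list \<Rightarrow> nat \<Rightarrow> nat list" where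
  "flip x i = x[i - 1 := 1 - occ x i]"

definition energy :: "real \<Rightarrow> nat list \<Rightarrow> real" where
  "energy \<kappa> x = - \<kappa> * (\<Sum>i\<in>{1..<length x}. real (occ x i * occ x (i + 1)))"

text \<open>Total jump rate k(x \<rightarrow> y) at inverse temperature beta (sum over all mechanisms;
  nearest-neighbour exchanges are counted once per bond).\<close>
definition rate :: "real \<Rightarrow> real \<Rightarrow> real \<Rightarrow> nat \<Rightarrow> real \<Rightarrow> nat list \<Rightarrow> nat list \<Rightarrow> real" where
  "rate \<kappa> \<mu>L \<mu>R N \<beta> x y =
     (\<Sum>i\<in>{1..<N}. if occ x i \<noteq> occ x (i + 1) \<and> y = exch x i (i + 1)
        then exp (- \<beta> / 2 * (energy \<kappa> (exch x i (i + 1)) - energy \<kappa> x)) else 0)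
   + (if y = flip x 1
        then exp (\<beta> * \<mu>L / 2 * (1 - 2 * real (occ x 1)))
             * exp (- \<beta> / 2 * (energy \<kappa> (flip x 1) - energy \<kappa> x)) else 0)
   + (if y = flip x N
        then exp (\<beta> * \<mu>R / 2 * (1 - 2 * real (occ x N)))
             * exp (- \<beta> / 2 * (energy \<kappa> (flip x N) - energy \<kappa> x)) else 0)"

definition allowed :: "nat \<Rightarrow> nat list \<Rightarrow> nat list \<Rightarrow> bool" where
  "allowed N x y \<longleftrightarrow>
     (\<exists>i\<in>{1..<N}. occ x i \<noteq> occ x (i + 1) \<and> y = exch x i (i + 1))
     \<or> y = flip x 1 \<or> y = flip x N"

definition phi :: "real \<Rightarrow> real \<Rightarrow> real \<Rightarrow> nat \<Rightarrow> nat list \<Rightarrow> nat list \<Rightarrow> real" where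
  "phi \<kappa> \<mu>L \<mu>R N x y = Lim at_top (\<lambda>\<beta>. ln (rate \<kappa> \<mu>L \<mu>R N \<beta> x y) / \<beta>)"

definition Gam :: "real \<Rightarrow> real \<Rightarrow> real \<Rightarrow> nat \<Rightarrow> nat list \<Rightarrow> real" where
  "Gam \<kappa> \<mu>L \<mu>R N x = - Max (phi \<kappa> \<mu>L \<mu>R N x ` {y. allowed N x y})"

definition U :: "real \<Rightarrow> real \<Rightarrow> real \<Rightarrow> nat \<Rightarrow> nat list \<Rightarrow> nat list \<Rightarrow> real" where
  "U \<kappa> \<mu>L \<mu>R N x y = - phi \<kappa> \<mu>L \<mu>R N x y - Gam \<kappa> \<mu>L \<mu>R N x"

definition blockconf :: "nat list \<Rightarrow> nat list \<Rightarrow> nat list" where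
  "blockconf ps qs = concat (map (\<lambda>(p, q). replicate p 1 @ replicate q 0) (zip ps qs))"

definition Pset :: "nat \<Rightarrow> nat list set" where
  "Pset N = {x. \<exists>ps qs. ps \<noteq> [] \<and> length qs = length ps \<and> x = blockconf ps qs
      \<and> length x = N
      \<and> (\<forall>i<length ps. ps ! i \<ge> 3)
      \<and> (\<forall>i<length qs - 1. qs ! i \<ge> 3)
      \<and> last qs \<ge> 2}"

definition Eset :: "nat \<Rightarrow> nat list set" where
  "Eset N = {y. \<exists>x\<in>Pset N. \<exists>j.
      (1 \<le> j \<and> j + 4 \<le> N \<and> occ x j = 1 \<and> occ x (j+1) = 1 \<and> occ x (j+2) = 1
         \<and> occ x (j+3) = 0 \<and> occ x (j+4) = 0 \<and> y = exch x (j+2) (j+3))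
    \<or> (1 \<le> j \<and> j + 5 \<le> N \<and> occ x j = 0 \<and> occ x (j+1) = 0 \<and> occ x (j+2) = 0
         \<and> occ x (j+3) = 1 \<and> occ x (j+4) = 1 \<and> occ x (j+5) = 1 \<and> y = exch x (j+2) (j+3))}"

end

theory Submission
  imports Defs
begin

text \<open>Then \<open>E = -\<kappa> \<cdot> bonds\<close>, an exchange across the bond \<open>(i, i+1)\<close> changes the number of
  occupied bonds by \<open>bond_change (site x) i \<in> {-1, 0, 1}\<close>, and every rate is exactly
  \<open>exp (\<beta> \<cdot> c)\<close>, so \<open>\<phi>\<close> is the exponent \<open>c\<close>.

  In a configuration of \<open>\<P>\<close> all blocks are thick, so every allowed exchange breaks a bond
  (\<open>\<phi> = -\<kappa>/2\<close>), while the boundary flips are worse because \<open>\<mu>\<^sub>L > \<kappa>\<close> and \<open>\<mu>\<^sub>R < -\<kappa>\<close>.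
  Hence the most likely move detaches a particle from the end of a block, which gives a
  configuration of \<open>\<E>\<close>.  From there the reverse exchange restores a bond (\<open>\<phi> = \<kappa>/2\<close>),
  while every other move gains no bond and is therefore strictly less likely.\<close>

definition site :: "nat list \<Rightarrow> nat \<Rightarrow> nat" where
  "site x k = (if 1 \<le> k \<and> k \<le> length x then occ x k else 0)"

definition bonds :: "nat list \<Rightarrow> nat" where
  "bonds x = (\<Sum>k\<in>{0..length x}. site x k * site x (k + 1))"

definition bond_change :: "(nat \<Rightarrow> nat) \<Rightarrow> nat \<Rightarrow> real" where
  "bond_change h k = (real (h (k + 1)) - real (h k)) * (real (h (k - 1)) - real (h (k + 2)))"

lemma site_0 [simp]: "site x 0 = 0"
  by (simp add: site_def)

lemma site_Nil [simp]: "site [] k = 0"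
  by (simp add: site_def)

lemma site_beyond: "length x < k \<Longrightarrow> site x k = 0"
  by (simp add: site_def)

lemma occ_eq_site: "1 \<le> i \<Longrightarrow> i \<le> length x \<Longrightarrow> occ x i = site x i"
  by (simp add: site_def)

lemma length_exch [simp]: "length (exch x i j) = length x"
  by (simp add: exch_def)

lemma length_flip [simp]: "length (flip x i) = length x"
  by (simp add: flip_def)

lemma site_exch:
  assumes "1 \<le> i" "i + 1 \<le> length x"
  shows "site (exch x i (Suc i)) m =
    (if m = i then site x (Suc i) else if m = Suc i then site x i else site x m)"
  using assms by (auto simp: site_def exch_def occ_def nth_list_update)

lemma site_flip:
  assumes "1 \<le> s" "s \<le> length x"
  shows "site (flip x s) m = (if m = s then 1 - site x s else site x m)"
  using assms by (auto simp: site_def flip_def occ_def nth_list_update)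

lemma exch_exch:
  assumes "1 \<le> i" "i + 1 \<le> length x"
  shows "exch (exch x i (Suc i)) i (Suc i) = x"
  using assms by (auto simp: exch_def occ_def nth_list_update intro!: nth_equalityI)

lemma energy_eq_bonds: "energy \<kappa> x = - \<kappa> * real (bonds x)"
proof -
  have "(\<Sum>i\<in>{1..<length x}. occ x i * occ x (i + 1))
      = (\<Sum>i\<in>{1..<length x}. site x i * site x (i + 1))"
    by (rule sum.cong) (auto simp: site_def)
  also have "\<dots> = bonds x"
    unfolding bonds_def by (rule sum.mono_neutral_left) (auto simp: site_def)
  finally show ?thesis
    unfolding energy_def by (metis of_nat_sum)
qed

lemma bonds_diff_local:
  assumes "length y = length x" "\<And>m. m \<notin> S \<Longrightarrow> site y m = site x m"
    and "{k \<in> {0..length x}. k \<in> S \<or> k + 1 \<in> S} \<subseteq> K" "K \<subseteq> {0..length x}"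
  shows "real (bonds y) - real (bonds x)
    = (\<Sum>k\<in>K. real (site y k * site y (k + 1)) - real (site x k * site x (k + 1)))"
proof -
  have "real (bonds y) - real (bonds x)
      = (\<Sum>k\<in>{0..length x}. real (site y k * site y (k + 1)) - real (site x k * site x (k + 1)))"
    unfolding bonds_def assms(1) by (simp add: sum_subtractf)
  also have "\<dots> = (\<Sum>k\<in>K. real (site y k * site y (k + 1)) - real (site x k * site x (k + 1)))"
  proof (rule sum.mono_neutral_right)
    show "\<forall>k\<in>{0..length x} - K.
        real (site y k * site y (k + 1)) - real (site x k * site x (k + 1)) = 0"
    proof
      fix k assume "k \<in> {0..length x} - K"
      then have "k \<notin> S" "k + 1 \<notin> S"
        using assms(3) by auto
      then show "real (site y k * site y (k + 1)) - real (site x k * site x (k + 1)) = 0"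
        using assms(2) by simp
    qed
  qed (use assms(4) in auto)
  finally show ?thesis .
qed

lemma bonds_exch:
  assumes "1 \<le> i" "i + 1 \<le> length x"
  shows "real (bonds (exch x i (Suc i))) - real (bonds x) = bond_change (site x) i"
proof -
  let ?y = "exch x i (Suc i)"
  have "real (bonds ?y) - real (bonds x)
      = (\<Sum>k\<in>{i-1, i, i+1}. real (site ?y k * site ?y (k + 1)) - real (site x k * site x (k + 1)))"
    by (rule bonds_diff_local[where S = "{i, i+1}"]) (use assms in \<open>auto simp: site_exch\<close>)
  also have "\<dots> = bond_change (site x) i"
    using assms by (cases i) (auto simp: site_exch bond_change_def algebra_simps)
  finally show ?thesis .
qed

lemma bonds_flip:
  assumes "1 \<le> s" "s \<le> length x"
  shows "real (bonds (flip x s)) - real (bonds x)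
    = (real (1 - site x s) - real (site x s)) * (real (site x (s - 1)) + real (site x (s + 1)))"
proof -
  have "real (bonds (flip x s)) - real (bonds x)
      = (\<Sum>k\<in>{s-1, s}. real (site (flip x s) k * site (flip x s) (k + 1))
                        - real (site x k * site x (k + 1)))"
    by (rule bonds_diff_local[where S = "{s}"]) (use assms in \<open>auto simp: site_flip\<close>)
  also have "\<dots> = (real (1 - site x s) - real (site x s)) * (real (site x (s - 1)) + real (site x (s + 1)))"
    using assms by (cases s) (auto simp: site_flip algebra_simps)
  finally show ?thesis .
qed

lemma phi_eq_of_rate_exp:
  assumes "\<And>\<beta>. rate \<kappa> \<mu>L \<mu>R N \<beta> x y = exp (\<beta> * c)"
  shows "phi \<kappa> \<mu>L \<mu>R N x y = c"
proof -
  have "\<forall>\<^sub>F \<beta> in at_top. ln (rate \<kappa> \<mu>L \<mu>R N \<beta> x y) / \<beta> = c"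
    using eventually_gt_at_top[of "0::real"] by eventually_elim (simp add: assms)
  then have "((\<lambda>\<beta>. ln (rate \<kappa> \<mu>L \<mu>R N \<beta> x y) / \<beta>) \<longlongrightarrow> c) at_top"
    by (rule tendsto_eventually)
  then show ?thesis
    unfolding phi_def by (rule tendsto_Lim[rotated]) simp
qed

lemma exch_eq_exch_at_interface:
  assumes "1 \<le> i" "Suc i \<le> length x" "1 \<le> j" "Suc j \<le> length x"
    and "site x j \<noteq> site x (Suc j)" "exch x i (Suc i) = exch x j (Suc j)"
  shows "j = i"
proof -
  let ?y = "exch x j (Suc j)"
  have changed: "site ?y j \<noteq> site x j" "site ?y (Suc j) \<noteq> site x (Suc j)"
    using assms by (auto simp: site_exch)
  have "site ?y m = site x m" if "m \<noteq> i" "m \<noteq> Suc i" for m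
  proof -
    have "site ?y m = site (exch x i (Suc i)) m"
      using assms(6) by simp
    also have "\<dots> = site x m"
      using assms(1,2) that by (simp add: site_exch)
    finally show ?thesis .
  qed
  then have "j \<in> {i, Suc i}" "Suc j \<in> {i, Suc i}"
    using changed by blast+
  then show ?thesis
    by auto
qed

lemma flip_neq_exch:
  assumes "1 \<le> s" "s \<le> length x" "1 \<le> j" "Suc j \<le> length x" "site x j \<noteq> site x (Suc j)"
  shows "flip x s \<noteq> exch x j (Suc j)"
proof
  assume eq: "flip x s = exch x j (Suc j)"
  have "site (flip x s) j = site (exch x j (Suc j)) j"
    and "site (flip x s) (Suc j) = site (exch x j (Suc j)) (Suc j)"
    using eq by simp_all
  then show False
    using assms by (auto simp: site_flip site_exch split: if_splits)
qed

lemma flip_first_neq_flip_last: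
  assumes "2 \<le> length x"
  shows "flip x 1 \<noteq> flip x (length x)"
proof
  assume "flip x 1 = flip x (length x)"
  then have "site (flip x 1) 1 = site (flip x (length x)) 1"
    by simp
  then show False
    using assms by (simp add: site_flip; arith)
qed

text \<open>A boundary flip is never an exchange, so the exchange part of its rate vanishes.\<close>

lemma exch_rates_at_flip:
  assumes "length x = N" "1 \<le> s" "s \<le> N"
  shows "(\<Sum>j\<in>{1..<N}. if occ x j \<noteq> occ x (j + 1) \<and> flip x s = exch x j (j + 1)
      then f j else 0) = (0::real)"
proof (rule sum.neutral, intro ballI)
  fix j assume j: "j \<in> {1..<N}"
  have "\<not> (occ x j \<noteq> occ x (j + 1) \<and> flip x s = exch x j (j + 1))"
    using flip_neq_exch[of s x j] assms j by (auto simp: occ_eq_site)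
  then show "(if occ x j \<noteq> occ x (j + 1) \<and> flip x s = exch x j (j + 1) then f j else 0) = 0"
    by (rule if_not_P)
qed

lemma rate_exch:
  assumes "length x = N" "1 \<le> i" "i < N" "site x i \<noteq> site x (Suc i)"
  shows "rate \<kappa> \<mu>L \<mu>R N \<beta> x (exch x i (Suc i)) = exp (\<beta> * (\<kappa> / 2 * bond_change (site x) i))"
proof -
  let ?y = "exch x i (Suc i)"
  have "?y \<noteq> flip x 1" "?y \<noteq> flip x N"
    using flip_neq_exch[of 1 x i] flip_neq_exch[of N x i] assms by auto
  moreover have "(occ x j \<noteq> occ x (j + 1) \<and> ?y = exch x j (j + 1)) \<longleftrightarrow> j = i"
    if "j \<in> {1..<N}" for j
    using exch_eq_exch_at_interface[of i x j] assms that by (auto simp: occ_eq_site)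
  ultimately have "rate \<kappa> \<mu>L \<mu>R N \<beta> x ?y = exp (- \<beta> / 2 * (energy \<kappa> ?y - energy \<kappa> x))"
    unfolding rate_def using assms(2,3) by (simp cong: if_cong)
  also have "\<dots> = exp (\<beta> * (\<kappa> / 2 * bond_change (site x) i))"
    using bonds_exch[of i x] assms by (simp add: energy_eq_bonds algebra_simps)
  finally show ?thesis .
qed

lemma rate_flip_first:
  assumes "length x = N" "2 \<le> N"
  shows "rate \<kappa> \<mu>L \<mu>R N \<beta> x (flip x 1) = exp (\<beta> * (\<mu>L / 2 * (1 - 2 * real (site x 1))
    + \<kappa> / 2 * (real (bonds (flip x 1)) - real (bonds x))))"
proof -
  have "rate \<kappa> \<mu>L \<mu>R N \<beta> x (flip x 1) = exp (\<beta> * \<mu>L / 2 * (1 - 2 * real (site x 1)))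
      * exp (- \<beta> / 2 * (energy \<kappa> (flip x 1) - energy \<kappa> x))"
    unfolding rate_def using assms exch_rates_at_flip[of x N 1] flip_first_neq_flip_last[of x]
    by (simp add: occ_eq_site)
  also have "\<dots> = exp (\<beta> * (\<mu>L / 2 * (1 - 2 * real (site x 1))
      + \<kappa> / 2 * (real (bonds (flip x 1)) - real (bonds x))))"
    unfolding exp_add[symmetric] energy_eq_bonds by (rule arg_cong[where f = exp]) (simp add: field_simps)
  finally show ?thesis .
qed

lemma rate_flip_last:
  assumes "length x = N" "2 \<le> N"
  shows "rate \<kappa> \<mu>L \<mu>R N \<beta> x (flip x N) = exp (\<beta> * (\<mu>R / 2 * (1 - 2 * real (site x N))
    + \<kappa> / 2 * (real (bonds (flip x N)) - real (bonds x))))"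
proof -
  have "rate \<kappa> \<mu>L \<mu>R N \<beta> x (flip x N) = exp (\<beta> * \<mu>R / 2 * (1 - 2 * real (site x N)))
      * exp (- \<beta> / 2 * (energy \<kappa> (flip x N) - energy \<kappa> x))"
    unfolding rate_def using assms exch_rates_at_flip[of x N N] flip_first_neq_flip_last[of x]
    by (simp add: occ_eq_site)
  also have "\<dots> = exp (\<beta> * (\<mu>R / 2 * (1 - 2 * real (site x N))
      + \<kappa> / 2 * (real (bonds (flip x N)) - real (bonds x))))"
    unfolding exp_add[symmetric] energy_eq_bonds by (rule arg_cong[where f = exp]) (simp add: field_simps)
  finally show ?thesis .
qed

lemma phi_exch:
  assumes "length x = N" "1 \<le> i" "i < N" "site x i \<noteq> site x (Suc i)"
  shows "phi \<kappa> \<mu>L \<mu>R N x (exch x i (Suc i)) = \<kappa> / 2 * bond_change (site x) i"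
  using assms by (intro phi_eq_of_rate_exp rate_exch)

lemma phi_flip_first_occupied:
  assumes "length x = N" "2 \<le> N" "site x 1 = 1"
  shows "phi \<kappa> \<mu>L \<mu>R N x (flip x 1) = - \<mu>L / 2 - \<kappa> / 2 * real (site x 2)"
proof (rule phi_eq_of_rate_exp)
  fix \<beta>
  show "rate \<kappa> \<mu>L \<mu>R N \<beta> x (flip x 1) = exp (\<beta> * (- \<mu>L / 2 - \<kappa> / 2 * real (site x 2)))"
    using rate_flip_first[OF assms(1,2)] bonds_flip[of 1 x] assms by (simp add: numeral_2_eq_2)
qed

lemma phi_flip_last_vacant:
  assumes "length x = N" "2 \<le> N" "site x N = 0"
  shows "phi \<kappa> \<mu>L \<mu>R N x (flip x N) = \<mu>R / 2 + \<kappa> / 2 * real (site x (N - 1))"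
proof (rule phi_eq_of_rate_exp)
  fix \<beta>
  show "rate \<kappa> \<mu>L \<mu>R N \<beta> x (flip x N) = exp (\<beta> * (\<mu>R / 2 + \<kappa> / 2 * real (site x (N - 1))))"
    using rate_flip_last[OF assms(1,2)] bonds_flip[of N x] assms by (simp add: site_beyond)
qed

definition thick_right_ends :: "nat list \<Rightarrow> bool" where
  "thick_right_ends x \<longleftrightarrow> (\<forall>i. site x i = 1 \<and> site x (i + 1) = 0 \<longrightarrow>
     3 \<le> i \<and> site x (i - 1) = 1 \<and> site x (i - 2) = 1 \<and> i + 2 \<le> length x \<and> site x (i + 2) = 0)"

definition thick_left_ends :: "nat list \<Rightarrow> bool" where
  "thick_left_ends x \<longleftrightarrow> (\<forall>i. 1 \<le> i \<and> site x i = 0 \<and> site x (i + 1) = 1 \<longrightarrow>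
     3 \<le> i \<and> site x (i - 1) = 0 \<and> site x (i - 2) = 0 \<and> i + 3 \<le> length x
     \<and> site x (i + 2) = 1 \<and> site x (i + 3) = 1)"

definition thick :: "nat list \<Rightarrow> bool" where
  "thick x \<longleftrightarrow> 5 \<le> length x \<and> (\<forall>k. site x k \<le> 1)
     \<and> site x 1 = 1 \<and> site x 2 = 1 \<and> site x 3 = 1
     \<and> site x (length x) = 0 \<and> site x (length x - 1) = 0
     \<and> thick_right_ends x \<and> thick_left_ends x"

lemma site_block:
  "site (replicate p 1 @ replicate q 0 @ R) k =
    (if k = 0 then 0 else if k \<le> p then 1 else if k \<le> p + q then 0 else site R (k - (p + q)))"
  by (auto simp: site_def occ_def nth_append)

lemma site_block_shift:
  "k = m + (p + q) \<Longrightarrow> 1 \<le> m \<Longrightarrow> site (replicate p a @ replicate q b @ R) k = site R m"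
  by (auto simp: site_def occ_def nth_append)

lemma thick_right_ends_block:
  assumes "3 \<le> p" "2 \<le> q" "R = [] \<or> thick R"
  shows "thick_right_ends (replicate p 1 @ replicate q 0 @ R)"
  unfolding thick_right_ends_def
proof (intro allI impI)
  let ?x = "replicate p 1 @ replicate q 0 @ R"
  fix i assume end_at_i: "site ?x i = 1 \<and> site ?x (i + 1) = 0"
  consider (first) "i \<le> p + q" | (rest) "p + q < i"
    by linarith
  then show "3 \<le> i \<and> site ?x (i - 1) = 1 \<and> site ?x (i - 2) = 1 \<and> i + 2 \<le> length ?x
      \<and> site ?x (i + 2) = 0"
  proof cases
    case first
    then have "i = p"
      using end_at_i[unfolded site_block] by (auto split: if_splits)
    then show ?thesis
      using assms(1,2) unfolding site_block by simp
  next
    case rest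
    define j where "j = i - (p + q)"
    have i: "i = j + (p + q)"
      using rest j_def by simp
    have "site R j = 1" "site R (j + 1) = 0"
      using end_at_i[unfolded site_block] rest i by simp_all
    moreover from this have "thick R"
      using assms(3) by auto
    ultimately have j: "3 \<le> j \<and> site R (j - 1) = 1 \<and> site R (j - 2) = 1 \<and> j + 2 \<le> length R
        \<and> site R (j + 2) = 0"
      unfolding thick_def thick_right_ends_def by blast
    have "site ?x (i - 1) = site R (j - 1)"
      by (rule site_block_shift) (use j i in auto)
    moreover have "site ?x (i - 2) = site R (j - 2)"
      by (rule site_block_shift) (use j i in auto)
    moreover have "site ?x (i + 2) = site R (j + 2)"
      by (rule site_block_shift) (use j i in auto)
    ultimately show ?thesis
      using j i by simp
  qed
qed

lemma thick_left_ends_block: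
  assumes "3 \<le> p" "R = [] \<or> (thick R \<and> 3 \<le> q)"
  shows "thick_left_ends (replicate p 1 @ replicate q 0 @ R)"
  unfolding thick_left_ends_def
proof (intro allI impI)
  let ?x = "replicate p 1 @ replicate q 0 @ R"
  fix i assume start_after_i: "1 \<le> i \<and> site ?x i = 0 \<and> site ?x (i + 1) = 1"
  consider (first) "i < p + q" | (between) "i = p + q" | (rest) "p + q < i"
    by linarith
  then show "3 \<le> i \<and> site ?x (i - 1) = 0 \<and> site ?x (i - 2) = 0 \<and> i + 3 \<le> length ?x
      \<and> site ?x (i + 2) = 1 \<and> site ?x (i + 3) = 1"
  proof cases
    case first
    then show ?thesis
      using start_after_i[unfolded site_block] by (auto split: if_splits)
  next
    case between
    then have "site R 1 = 1"
      using start_after_i[unfolded site_block] by simp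
    then have "thick R" "3 \<le> q"
      using assms(2) by auto
    then show ?thesis
      using between assms(1) unfolding thick_def site_block by (simp; arith)
  next
    case rest
    define j where "j = i - (p + q)"
    have i: "i = j + (p + q)"
      using rest j_def by simp
    have "1 \<le> j" "site R j = 0" "site R (j + 1) = 1"
      using start_after_i[unfolded site_block] rest i by simp_all
    moreover from this have "thick R"
      using assms(2) by auto
    ultimately have j: "3 \<le> j \<and> site R (j - 1) = 0 \<and> site R (j - 2) = 0 \<and> j + 3 \<le> length R
        \<and> site R (j + 2) = 1 \<and> site R (j + 3) = 1"
      unfolding thick_def thick_left_ends_def by blast
    have "site ?x (i - 1) = site R (j - 1)"
      by (rule site_block_shift) (use j i in auto)
    moreover have "site ?x (i - 2) = site R (j - 2)"
      by (rule site_block_shift) (use j i in auto)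
    moreover have "site ?x (i + 2) = site R (j + 2)"
      by (rule site_block_shift) (use j i in auto)
    moreover have "site ?x (i + 3) = site R (j + 3)"
      by (rule site_block_shift) (use j i in auto)
    ultimately show ?thesis
      using j i by simp
  qed
qed

lemma thick_block:
  assumes "3 \<le> p" and R: "(R = [] \<and> 2 \<le> q) \<or> (thick R \<and> 3 \<le> q)"
  shows "thick (replicate p 1 @ replicate q 0 @ R)"
proof -
  let ?x = "replicate p 1 @ replicate q 0 @ R"
  let ?n = "length ?x"
  have "\<forall>k. site ?x k \<le> 1"
    using R unfolding site_block thick_def by auto
  moreover have "site ?x ?n = 0 \<and> site ?x (?n - 1) = 0"
  proof (cases "R = []")
    case True
    then have "2 \<le> q"
      using R by (auto simp: thick_def)
    then show ?thesis
      using True unfolding site_block by simp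
  next
    case False
    with R have "thick R"
      by simp
    then have "5 \<le> length R" "site R (length R) = 0" "site R (length R - 1) = 0"
      unfolding thick_def by auto
    moreover have "site ?x ?n = site R (length R)" "site ?x (?n - 1) = site R (length R - 1)"
      by (rule site_block_shift; use \<open>5 \<le> length R\<close> in simp)+
    ultimately show ?thesis
      by simp
  qed
  moreover have "5 \<le> ?n"
    using R assms(1) unfolding thick_def by auto
  moreover have "thick_right_ends ?x"
    by (rule thick_right_ends_block) (use assms in auto)
  moreover have "thick_left_ends ?x"
    by (rule thick_left_ends_block) (use assms in auto)
  ultimately show ?thesis
    using assms(1) unfolding thick_def site_block by simp
qed

lemma blockconf_Cons:
  "blockconf (p # ps) (q # qs) = replicate p 1 @ replicate q 0 @ blockconf ps qs"
  by (simp add: blockconf_def)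

lemma thick_blockconf:
  "ps \<noteq> [] \<Longrightarrow> length qs = length ps \<Longrightarrow> \<forall>i<length ps. 3 \<le> ps ! i \<Longrightarrow>
   \<forall>i<length qs - 1. 3 \<le> qs ! i \<Longrightarrow> 2 \<le> last qs \<Longrightarrow> thick (blockconf ps qs)"
proof (induction ps arbitrary: qs)
  case (Cons p ps)
  then obtain q qs' where qs: "qs = q # qs'"
    by (cases qs) auto
  have p: "3 \<le> p"
    using Cons.prems(3) by force
  show ?case
  proof (cases "ps = []")
    case True
    then show ?thesis
      using Cons.prems(2,5) qs p thick_block[of p "[]" q] by (simp add: blockconf_def)
  next
    case False
    then have "qs' \<noteq> []"
      using Cons.prems(2) qs by auto
    have "thick (blockconf ps qs')"
    proof (rule Cons.IH[OF False])
      show "length qs' = length ps"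
        using Cons.prems(2) qs by simp
      show "\<forall>i<length ps. 3 \<le> ps ! i"
        using Cons.prems(3) by force
      show "\<forall>i<length qs' - 1. 3 \<le> qs' ! i"
      proof (intro allI impI)
        fix i assume "i < length qs' - 1"
        then show "3 \<le> qs' ! i"
          using Cons.prems(4)[rule_format, of "Suc i"] qs by simp
      qed
      show "2 \<le> last qs'"
        using Cons.prems(5) qs \<open>qs' \<noteq> []\<close> by simp
    qed
    moreover have "3 \<le> q"
      using Cons.prems(4) qs \<open>qs' \<noteq> []\<close> by force
    ultimately show ?thesis
      unfolding qs blockconf_Cons using thick_block p by blast
  qed
qed simp

lemma thick_if_Pset: "x \<in> Pset N \<Longrightarrow> thick x \<and> length x = N"
  unfolding Pset_def using thick_blockconf by blast

lemma thick_interface_window: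
  assumes "thick x" "1 \<le> i" "site x i \<noteq> site x (Suc i)"
  shows "3 \<le> i \<and> i + 2 \<le> length x \<and> (site x i = 0 \<longrightarrow> i + 3 \<le> length x)
    \<and> site x i \<le> 1 \<and> site x (i + 1) = 1 - site x i
    \<and> site x (i - 2) = site x i \<and> site x (i - 1) = site x i
    \<and> site x (i + 2) = site x (i + 1) \<and> site x (i + 3) = site x (i + 1)"
proof -
  have le: "\<And>m. site x m \<le> 1" and right: "thick_right_ends x" and left: "thick_left_ends x"
    using assms(1) unfolding thick_def by auto
  consider (right_end) "site x i = 1" "site x (i + 1) = 0"
    | (left_end) "site x i = 0" "site x (i + 1) = 1"
    using le[of i] le[of "i + 1"] assms(3) by fastforce
  then show ?thesis
  proof cases
    case right_end
    with right have w: "3 \<le> i \<and> site x (i - 1) = 1 \<and> site x (i - 2) = 1 \<and> i + 2 \<le> length x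
        \<and> site x (i + 2) = 0"
      unfolding thick_right_ends_def by blast
    have "site x (i + 3) = 0"
    proof (rule ccontr)
      assume "site x (i + 3) \<noteq> 0"
      then have "site x (i + 2 + 1) = 1"
        using le[of "i + 3"] by (simp add: numeral_3_eq_3)
      with left w have "site x (i + 2 - 2) = 0"
        unfolding thick_left_ends_def by (metis le_add2 le_trans one_le_numeral)
      with right_end show False
        by simp
    qed
    with right_end w show ?thesis
      by simp
  next
    case left_end
    with left assms(2) show ?thesis
      unfolding thick_left_ends_def by auto
  qed
qed

lemma bond_change_thick:
  assumes "thick x" "1 \<le> i" "site x i \<noteq> site x (Suc i)"
  shows "bond_change (site x) i = -1"
  using thick_interface_window[OF assms] by (auto simp: bond_change_def le_Suc_eq)

lemma site_exch_interface:
  assumes "thick x" "1 \<le> i" "site x i \<noteq> site x (Suc i)"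
  shows "site (exch x i (Suc i)) m =
    (if m = i then site x (Suc i) else if m = Suc i then site x i else site x m)"
  using thick_interface_window[OF assms] assms(2) by (intro site_exch) auto

lemma bond_change_exch_back:
  assumes "thick x" "1 \<le> i" "site x i \<noteq> site x (Suc i)"
  shows "bond_change (site (exch x i (Suc i))) i = 1"
  using thick_interface_window[OF assms] site_exch_interface[OF assms]
  by (auto simp: bond_change_def le_Suc_eq)

text \<open>After a particle has been detached, the only new interfaces are the two bonds next to
  the moved pair, and exchanging across either of them leaves the number of bonds unchanged.\<close>

lemma bond_change_after_exch_nonpos:
  assumes "thick x" "1 \<le> i" "site x i \<noteq> site x (Suc i)"
    and "1 \<le> k" "k \<noteq> i" "site (exch x i (Suc i)) k \<noteq> site (exch x i (Suc i)) (Suc k)"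
  shows "bond_change (site (exch x i (Suc i))) k \<le> 0"
proof -
  define y where "y = exch x i (Suc i)"
  note w = thick_interface_window[OF assms(1-3)]
  have y: "site y m = (if m = i then site x (Suc i) else if m = Suc i then site x i else site x m)"
    for m
    unfolding y_def by (rule site_exch_interface[OF assms(1-3)])
  have interface: "site y k \<noteq> site y (Suc k)"
    using assms(6) unfolding y_def .
  obtain m where m: "i = m + 3"
    using w by (metis add.commute le_add_diff_inverse)
  consider (far) "k + 3 \<le> i \<or> i + 3 \<le> k" | (left) "k = m + 2" | (right) "k = m + 4"
    | (inside) "k = m + 1 \<or> k = m + 5"
    using assms(5) m by linarith
  then have "bond_change (site y) k \<le> 0"
  proof cases
    case far
    then have same: "site y (k - 1) = site x (k - 1)" "site y k = site x k"
      "site y (k + 1) = site x (k + 1)" "site y (k + 2) = site x (k + 2)"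
      by (auto simp: y)
    then have "bond_change (site y) k = bond_change (site x) k"
      by (simp add: bond_change_def)
    also have "\<dots> = -1"
      using bond_change_thick[OF assms(1,4)] interface same by simp
    finally show ?thesis
      by simp
  qed (use interface w m in \<open>auto simp: y bond_change_def add.commute\<close>)
  then show ?thesis
    unfolding y_def .
qed

lemma exch_interface_mem_Eset:
  assumes "x \<in> Pset N" "1 \<le> i" "site x i \<noteq> site x (Suc i)"
  shows "exch x i (Suc i) \<in> Eset N"
proof -
  have x: "thick x" "length x = N"
    using thick_if_Pset[OF assms(1)] by auto
  note w = thick_interface_window[OF x(1) assms(2,3)]
  have idx: "i - 2 + 1 = i - 1" "i - 2 + 2 = i" "i - 2 + 3 = i + 1" "i - 2 + 4 = i + 2"
    "i - 2 + 5 = i + 3"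
    using w by auto
  have occ: "occ x m = site x m" if "1 \<le> m" "m \<le> N" for m
    using occ_eq_site that x(2) by simp
  show ?thesis
    unfolding Eset_def
  proof (intro CollectI bexI[OF _ assms(1)] exI[of _ "i - 2"])
    show "1 \<le> i - 2 \<and> i - 2 + 4 \<le> N \<and> occ x (i - 2) = 1 \<and> occ x (i - 2 + 1) = 1
        \<and> occ x (i - 2 + 2) = 1 \<and> occ x (i - 2 + 3) = 0 \<and> occ x (i - 2 + 4) = 0
        \<and> exch x i (Suc i) = exch x (i - 2 + 2) (i - 2 + 3)
      \<or> 1 \<le> i - 2 \<and> i - 2 + 5 \<le> N \<and> occ x (i - 2) = 0 \<and> occ x (i - 2 + 1) = 0
        \<and> occ x (i - 2 + 2) = 0 \<and> occ x (i - 2 + 3) = 1 \<and> occ x (i - 2 + 4) = 1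
        \<and> occ x (i - 2 + 5) = 1 \<and> exch x i (Suc i) = exch x (i - 2 + 2) (i - 2 + 3)"
      unfolding idx using w x(2) by (auto simp: occ le_Suc_eq)
  qed
qed

lemma exists_change_between:
  assumes "a \<le> b" "f a \<noteq> f b"
  shows "\<exists>i. a \<le> i \<and> i < b \<and> f i \<noteq> f (Suc i)"
  using assms
proof (induction b)
  case (Suc b)
  show ?case
  proof (cases "a \<le> b \<and> f a \<noteq> f b")
    case True
    then show ?thesis
      using Suc.IH less_SucI by blast
  next
    case False
    then show ?thesis
      using Suc.prems le_Suc_eq by (metis lessI)
  qed
qed simp

lemma allowed_exch_or_flip:
  "length x = N \<Longrightarrow> allowed N x y \<Longrightarrow>
   (\<exists>i. 1 \<le> i \<and> i < N \<and> site x i \<noteq> site x (Suc i) \<and> y = exch x i (Suc i))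
   \<or> y = flip x 1 \<or> y = flip x N"
  unfolding allowed_def by (auto simp: occ_eq_site)

lemma allowed_exch:
  "length x = N \<Longrightarrow> 1 \<le> i \<Longrightarrow> i < N \<Longrightarrow> site x i \<noteq> site x (Suc i) \<Longrightarrow>
   allowed N x (exch x i (Suc i))"
  unfolding allowed_def by (auto simp: occ_eq_site)

lemma finite_allowed: "finite {y. allowed N x y}"
proof (rule finite_subset)
  show "{y. allowed N x y} \<subseteq> insert (flip x 1) (insert (flip x N) ((\<lambda>i. exch x i (i + 1)) ` {1..<N}))"
    unfolding allowed_def by auto
qed simp

lemma U_zero_imp_phi_maximal:
  assumes "U \<kappa> \<mu>L \<mu>R N x y = 0" "allowed N x y'"
  shows "phi \<kappa> \<mu>L \<mu>R N x y' \<le> phi \<kappa> \<mu>L \<mu>R N x y"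
proof -
  have "phi \<kappa> \<mu>L \<mu>R N x y' \<le> Max (phi \<kappa> \<mu>L \<mu>R N x ` {y. allowed N x y})"
    using assms(2) finite_allowed by (intro Max_ge) auto
  with assms(1) show ?thesis
    unfolding U_def Gam_def by simp
qed

lemma U_zero_imp_exch:
  assumes "length x = N" "allowed N x y" "U \<kappa> \<mu>L \<mu>R N x y = 0"
    and "1 \<le> j" "j < N" "site x j \<noteq> site x (Suc j)"
    and "phi \<kappa> \<mu>L \<mu>R N x (flip x 1) < phi \<kappa> \<mu>L \<mu>R N x (exch x j (Suc j))"
    and "phi \<kappa> \<mu>L \<mu>R N x (flip x N) < phi \<kappa> \<mu>L \<mu>R N x (exch x j (Suc j))"
  obtains i where "1 \<le> i" "i < N" "site x i \<noteq> site x (Suc i)" "y = exch x i (Suc i)"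
    "phi \<kappa> \<mu>L \<mu>R N x (exch x j (Suc j)) \<le> phi \<kappa> \<mu>L \<mu>R N x y"
proof -
  have "phi \<kappa> \<mu>L \<mu>R N x (exch x j (Suc j)) \<le> phi \<kappa> \<mu>L \<mu>R N x y"
    using U_zero_imp_phi_maximal[OF assms(3) allowed_exch[OF assms(1,4-6)]] .
  with allowed_exch_or_flip[OF assms(1,2)] assms(7,8) that show ?thesis
    by force
qed

lemma U_zero_from_thick_imp_interface_exch:
  assumes "thick x" "length x = N" "\<mu>L > \<kappa>" "\<kappa> > 0" "\<mu>R < - \<kappa>"
    and "allowed N x y" "U \<kappa> \<mu>L \<mu>R N x y = 0"
  obtains i where "1 \<le> i" "i < N" "site x i \<noteq> site x (Suc i)" "y = exch x i (Suc i)"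
proof -
  have N: "5 \<le> N" and ends: "site x 1 = 1" "site x 2 = 1" "site x N = 0" "site x (N - 1) = 0"
    using assms(1,2) unfolding thick_def by auto
  obtain j where j: "1 \<le> j" "j < N" "site x j \<noteq> site x (Suc j)"
    using exists_change_between[of 1 N "site x"] ends N by auto
  have "phi \<kappa> \<mu>L \<mu>R N x (exch x j (Suc j)) = - \<kappa> / 2"
    using phi_exch[OF assms(2) j] bond_change_thick[OF assms(1) j(1,3)] by simp
  moreover have "phi \<kappa> \<mu>L \<mu>R N x (flip x 1) = - \<mu>L / 2 - \<kappa> / 2"
    using phi_flip_first_occupied[OF assms(2)] N ends by simp
  moreover have "phi \<kappa> \<mu>L \<mu>R N x (flip x N) = \<mu>R / 2"
    using phi_flip_last_vacant[OF assms(2)] N ends by simp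
  ultimately have "phi \<kappa> \<mu>L \<mu>R N x (flip x 1) < phi \<kappa> \<mu>L \<mu>R N x (exch x j (Suc j))"
    and "phi \<kappa> \<mu>L \<mu>R N x (flip x N) < phi \<kappa> \<mu>L \<mu>R N x (exch x j (Suc j))"
    using assms(3-5) by simp_all
  then show ?thesis
    by (rule U_zero_imp_exch[OF assms(2,6,7) j]) (rule that)
qed

lemma U_zero_after_interface_exch_imp_reverse:
  assumes "thick x" "length x = N" "\<mu>L > \<kappa>" "\<kappa> > 0" "\<mu>R < - \<kappa>"
    and "1 \<le> i" "i < N" "site x i \<noteq> site x (Suc i)"
    and "allowed N (exch x i (Suc i)) z" "U \<kappa> \<mu>L \<mu>R N (exch x i (Suc i)) z = 0"
  shows "z = x"
proof -
  define y where "y = exch x i (Suc i)"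
  have y: "site y m = (if m = i then site x (Suc i) else if m = Suc i then site x i else site x m)"
    for m
    unfolding y_def by (rule site_exch_interface[OF assms(1,6,8)])
  have len: "length y = N"
    using assms(2) by (simp add: y_def)
  have interface: "site y i \<noteq> site y (Suc i)"
    using assms(8) by (simp add: y)
  have reverse: "exch y i (Suc i) = x"
    using exch_exch[of i x] assms(2,6,7) by (simp add: y_def)
  have le: "site y m \<le> 1" for m
    using assms(1) unfolding thick_def by (simp add: y)
  have N: "5 \<le> N" and ends: "site y 1 = 1" "site y N = 0"
    using assms(1,2) thick_interface_window[OF assms(1,6,8)] unfolding thick_def by (auto simp: y)
  have phi_back: "phi \<kappa> \<mu>L \<mu>R N y x = \<kappa> / 2"
    using phi_exch[OF len assms(6,7) interface] bond_change_exch_back[OF assms(1,6,8), folded y_def]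
      reverse by simp
  have "phi \<kappa> \<mu>L \<mu>R N y (flip y 1) \<le> - \<mu>L / 2"
    using phi_flip_first_occupied[OF len] N ends assms(4) by simp
  moreover have "phi \<kappa> \<mu>L \<mu>R N y (flip y N) \<le> \<mu>R / 2 + \<kappa> / 2"
    using phi_flip_last_vacant[OF len] N ends assms(4) le[of "N - 1"] by (simp add: mult_left_le)
  ultimately have "phi \<kappa> \<mu>L \<mu>R N y (flip y 1) < phi \<kappa> \<mu>L \<mu>R N y (exch y i (Suc i))"
    and "phi \<kappa> \<mu>L \<mu>R N y (flip y N) < phi \<kappa> \<mu>L \<mu>R N y (exch y i (Suc i))"
    using phi_back assms(3-5) unfolding reverse by simp_all
  then obtain k where k: "1 \<le> k" "k < N" "site y k \<noteq> site y (Suc k)"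
    and z: "z = exch y k (Suc k)" and maximal: "\<kappa> / 2 \<le> phi \<kappa> \<mu>L \<mu>R N y z"
    by (rule U_zero_imp_exch[OF len assms(9,10)[folded y_def] assms(6,7) interface])
      (use phi_back reverse in simp)
  show ?thesis
  proof (cases "k = i")
    case False
    then have no_gain: "bond_change (site y) k \<le> 0"
      using bond_change_after_exch_nonpos[OF assms(1,6,8) k(1) False] k(3) unfolding y_def by simp
    have "phi \<kappa> \<mu>L \<mu>R N y z = \<kappa> / 2 * bond_change (site y) k"
      using phi_exch[OF len k] z by simp
    also have "\<dots> \<le> 0"
      using assms(4) no_gain by (simp add: mult_nonneg_nonpos)
    finally show ?thesis
      using maximal assms(4) by simp
  qed (use z reverse in simp)
qed

theorem lemma1:
  fixes N :: nat and \<kappa> \<mu>L \<mu>R :: real and x y :: "nat list"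
  assumes "N \<ge> 5"
    and "\<mu>L > \<kappa>" and "\<kappa> > 0" and "0 > \<mu>R" and "\<bar>\<mu>R\<bar> > \<kappa>"
    and "x \<in> Pset N"
    and "allowed N x y"
    and "U \<kappa> \<mu>L \<mu>R N x y = 0"
  shows "y \<in> Eset N \<and>
         (\<forall>z. allowed N y z \<and> U \<kappa> \<mu>L \<mu>R N y z = 0 \<longrightarrow> z = x)"
proof -
  have x: "thick x" "length x = N"
    using thick_if_Pset[OF assms(6)] by auto
  have \<mu>R: "\<mu>R < - \<kappa>"
    using assms(4,5) by simp
  obtain i where i: "1 \<le> i" "i < N" "site x i \<noteq> site x (Suc i)" and y: "y = exch x i (Suc i)"
    using U_zero_from_thick_imp_interface_exch[OF x assms(2,3) \<mu>R assms(7,8)] .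
  show ?thesis
    using exch_interface_mem_Eset[OF assms(6) i(1,3)]
      U_zero_after_interface_exch_imp_reverse[OF x assms(2,3) \<mu>R i] y by blast
qed

end
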